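(* Let $M$ be a simple rank-$3$ matroid with nine elements whose ground set is the union of three long lines that share a common point. Then either $M$ has a $U_{2,5}$-minor, or $M\cong R_9$.
   Context: A point of a matroid is a rank-one flat; a line (rank-2 flat) is long if it contains at least three points. $R_9$ (the ternary Reid geometry) is the simple rank-$3$ matroid consisting of long lines $L_1,L_2,L_3$ with a common intersection point $x$ such that $|L_1|=|L_2|=4$, $|L_3|=3$, and both elements of $L_3-\{x\}$ lie on four long lines. *)

theory Defs
  imports Main
begin

definition matroid :: "'a set \<Rightarrow> 'a set set \<Rightarrow> bool" where
  "matroid E I \<longleftrightarrow> finite E \<and> (\<forall>X\<in>I. X \<subseteq> E) \<and> {} \<in> I
     \<and> (\<forall>X Y. X \<in> I \<and> Y \<subseteq> X \<longrightarrow> Y \<in> I)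
     \<and> (\<forall>X Y. X \<in> I \<and> Y \<in> I \<and> card X < card Y \<longrightarrow> (\<exists>e\<in>Y - X. insert e X \<in> I))"

definition rank_of :: "'a set set \<Rightarrow> 'a set \<Rightarrow> nat" where
  "rank_of I X = Max {card Y | Y. Y \<subseteq> X \<and> Y \<in> I}"

definition simple_matroid :: "'a set \<Rightarrow> 'a set set \<Rightarrow> bool" where
  "simple_matroid E I \<longleftrightarrow> (\<forall>X. X \<subseteq> E \<and> card X \<le> 2 \<longrightarrow> X \<in> I)"

definition flat :: "'a set \<Rightarrow> 'a set set \<Rightarrow> 'a set \<Rightarrow> bool" where
  "flat E I F \<longleftrightarrow> F \<subseteq> E \<and> (\<forall>e \<in> E - F. rank_of I (insert e F) > rank_of I F)"

definition point :: "'a set \<Rightarrow> 'a set set \<Rightarrow> 'a set \<Rightarrow> bool" where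
  "point E I P \<longleftrightarrow> flat E I P \<and> rank_of I P = 1"

definition line :: "'a set \<Rightarrow> 'a set set \<Rightarrow> 'a set \<Rightarrow> bool" where
  "line E I L \<longleftrightarrow> flat E I L \<and> rank_of I L = 2"

definition long_line :: "'a set \<Rightarrow> 'a set set \<Rightarrow> 'a set \<Rightarrow> bool" where
  "long_line E I L \<longleftrightarrow> line E I L \<and> card {P. point E I P \<and> P \<subseteq> L} \<ge> 3"

text \<open>Independent sets of the minor M / C \ D (C contracted, D deleted), on ground set E - (C \<union> D).\<close>
definition minor_indep :: "'a set \<Rightarrow> 'a set set \<Rightarrow> 'a set \<Rightarrow> 'a set \<Rightarrow> 'a set set" where
  "minor_indep E I C D =
     {X. X \<subseteq> E - (C \<union> D) \<and> rank_of I (X \<union> C) = card X + rank_of I C}"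

definition matroid_iso :: "'a set \<Rightarrow> 'a set set \<Rightarrow> 'b set \<Rightarrow> 'b set set \<Rightarrow> bool" where
  "matroid_iso E1 I1 E2 I2 \<longleftrightarrow>
     (\<exists>f. bij_betw f E1 E2 \<and> (\<forall>X. X \<subseteq> E1 \<longrightarrow> (X \<in> I1 \<longleftrightarrow> f ` X \<in> I2)))"

definition has_minor :: "'a set \<Rightarrow> 'a set set \<Rightarrow> 'b set \<Rightarrow> 'b set set \<Rightarrow> bool" where
  "has_minor E I E' I' \<longleftrightarrow>
     (\<exists>C D. C \<subseteq> E \<and> D \<subseteq> E \<and> C \<inter> D = {} \<and>
        matroid_iso (E - (C \<union> D)) (minor_indep E I C D) E' I')"

definition U_ground :: "nat \<Rightarrow> nat set" where
  "U_ground n = {0..<n}"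
definition U_indep :: "nat \<Rightarrow> nat \<Rightarrow> nat set set" where
  "U_indep r n = {X. X \<subseteq> {0..<n} \<and> card X \<le> r}"

text \<open>R_9: x = 0, L1 = {0,1,2,3}, L2 = {0,4,5,6}, L3 = {0,7,8}; the points 7 and 8 each lie on
  three further long lines, which are transversals of L1 - {0} and L2 - {0}.\<close>
definition R9_ground :: "nat set" where
  "R9_ground = {0..<9}"
definition R9_long_lines :: "nat set set" where
  "R9_long_lines = {{0,1,2,3}, {0,4,5,6}, {0,7,8},
                    {7,1,4}, {7,2,5}, {7,3,6},
                    {8,1,5}, {8,2,6}, {8,3,4}}"
definition R9_indep :: "nat set set" where
  "R9_indep = {X. X \<subseteq> R9_ground \<and>
      (card X \<le> 2 \<or> (card X = 3 \<and> \<not> (\<exists>L\<in>R9_long_lines. X \<subseteq> L)))}"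

end

theory Submission imports Defs begin

text \<open>The three lines meet pairwise only in the common point x, so their sizes add up to 11 and
  one of them, say L3 = {x, c1, c2}, has three elements. Contracting a point c leaves a rank-2
  matroid, in which five elements no two of which are collinear with c form a U_{2,5}.
  Such five elements exist if L1 or L2 has at least five points, or if some a in L1 - x lies on
  no line through c meeting L2 - x, for c = c1 or c = c2: take x, a and the three points of L2 - x.
  Otherwise the lines through c1, as well as those through c2, match L1 - x bijectively with
  L2 - x. No pair is matched by both, since it would be collinear with c1 and c2 and hence lie on
  L3. So the two matchings differ by a 3-cycle, and this is exactly the configuration of R9.\<close>

lemma triple_subset_eq:
  assumes "{p,q,r} \<subseteq> {u,v,w}" "p \<noteq> q" "p \<noteq> r" "q \<noteq> r"
  shows "{p,q,r} = {u,v,w}"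
proof (rule card_subset_eq)
  show "card {p,q,r} = card {u,v,w}"
  proof (rule antisym)
    show "card {p,q,r} \<le> card {u,v,w}" using assms(1) by (simp add: card_mono)
    have "card {u,v,w} \<le> 3" by (simp add: card_insert_le_m1)
    then show "card {u,v,w} \<le> card {p,q,r}" using assms(2-4) by simp
  qed
qed (use assms in auto)

definition two_in :: "'a \<Rightarrow> 'a \<Rightarrow> 'a \<Rightarrow> 'a set \<Rightarrow> bool" where
  "two_in u v w L \<longleftrightarrow> (u \<in> L \<and> v \<in> L) \<or> (u \<in> L \<and> w \<in> L) \<or> (v \<in> L \<and> w \<in> L)"

lemma triple_meets_three_parts:
  assumes "{u,v,w} \<subseteq> insert x (P \<union> Q \<union> R)"
    and "\<not> two_in u v w (insert x P)" "\<not> two_in u v w (insert x Q)" "\<not> two_in u v w (insert x R)"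
  shows "\<exists>p\<in>P. \<exists>q\<in>Q. \<exists>r\<in>R. {p,q,r} \<subseteq> {u,v,w}"
  using assms unfolding two_in_def by auto

lemma card_union_concurrent:
  assumes "finite L1" "finite L2" "finite L3"
    and "L1 \<inter> L2 = {x}" "L1 \<inter> L3 = {x}" "L2 \<inter> L3 = {x}"
  shows "card (L1 \<union> L2 \<union> L3) + 2 = card L1 + card L2 + card L3"
proof -
  have "card L1 + card L2 = card (L1 \<union> L2) + 1"
    using card_Un_Int[of L1 L2] assms by simp
  moreover have "(L1 \<union> L2) \<inter> L3 = {x}" using assms(5,6) by blast
  then have "card (L1 \<union> L2) + card L3 = card (L1 \<union> L2 \<union> L3) + 1"
    using card_Un_Int[of "L1 \<union> L2" L3] assms(1-3) by simp
  ultimately show ?thesis by simp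
qed

lemma matroid_iso_of_bij:
  assumes g: "bij_betw g E' E" and indep: "\<And>Y. Y \<subseteq> E' \<Longrightarrow> g ` Y \<in> I \<longleftrightarrow> Y \<in> I'"
  shows "matroid_iso E I E' I'"
proof -
  let ?f = "inv_into E' g"
  have f: "bij_betw ?f E E'" using g by (rule bij_betw_inv_into)
  have "X \<in> I \<longleftrightarrow> ?f ` X \<in> I'" if X: "X \<subseteq> E" for X
  proof -
    have "?f ` X \<subseteq> E'" using f X bij_betw_imp_surj_on by blast
    moreover have "g ` ?f ` X = X" using g X by (simp add: bij_betw_def image_inv_into_cancel)
    ultimately show ?thesis using indep by metis
  qed
  then show ?thesis unfolding matroid_iso_def using f by blast
qed

locale simple_rank3_matroid =
  fixes E :: "'a set" and I :: "'a set set"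
  assumes matroid: "matroid E I" and simple: "simple_matroid E I" and rank_ground: "rank_of I E = 3"
begin

lemma finite_ground: "finite E"
  using matroid unfolding matroid_def by simp

lemma indep_subset_ground: "X \<in> I \<Longrightarrow> X \<subseteq> E"
  using matroid unfolding matroid_def by simp

lemma finite_subset_ground: "X \<subseteq> E \<Longrightarrow> finite X"
  by (rule finite_subset[OF _ finite_ground])

lemma indep_empty: "{} \<in> I"
  using matroid unfolding matroid_def by simp

lemma indep_subset: "X \<in> I \<Longrightarrow> Y \<subseteq> X \<Longrightarrow> Y \<in> I"
  using matroid unfolding matroid_def by simp

lemma indep_augment: "X \<in> I \<Longrightarrow> Y \<in> I \<Longrightarrow> card X < card Y \<Longrightarrow> \<exists>e\<in>Y - X. insert e X \<in> I"
  using matroid unfolding matroid_def by simp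

lemma indep_if_card_le_2: "X \<subseteq> E \<Longrightarrow> card X \<le> 2 \<Longrightarrow> X \<in> I"
  using simple unfolding simple_matroid_def by blast

lemma card_le_rank:
  assumes "finite X" "Y \<subseteq> X" "Y \<in> I"
  shows "card Y \<le> rank_of I X"
proof -
  have "{card Y | Y. Y \<subseteq> X \<and> Y \<in> I} \<subseteq> card ` Pow X" by blast
  then have "finite {card Y | Y. Y \<subseteq> X \<and> Y \<in> I}" using assms(1) finite_subset by blast
  then show ?thesis unfolding rank_of_def using assms by (auto intro: Max_ge)
qed

lemma rank_attained:
  assumes "finite X"
  obtains Y where "Y \<subseteq> X" "Y \<in> I" "card Y = rank_of I X"
proof -
  have "{card Y | Y. Y \<subseteq> X \<and> Y \<in> I} \<subseteq> card ` Pow X" by blast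
  then have "finite {card Y | Y. Y \<subseteq> X \<and> Y \<in> I}" using assms finite_subset by blast
  moreover have "{card Y | Y. Y \<subseteq> X \<and> Y \<in> I} \<noteq> {}"
    using indep_empty by blast
  ultimately have "rank_of I X \<in> {card Y | Y. Y \<subseteq> X \<and> Y \<in> I}"
    unfolding rank_of_def by (rule Max_in)
  then show ?thesis using that by auto
qed

lemma card_indep_le_3: "X \<in> I \<Longrightarrow> card X \<le> 3"
  using card_le_rank[OF finite_ground indep_subset_ground] rank_ground by simp

lemma rank_le_3: "finite X \<Longrightarrow> rank_of I X \<le> 3"
  using card_indep_le_3 by (metis rank_attained)

lemma rank_indep:
  assumes "Y \<in> I" shows "rank_of I Y = card Y"
proof -
  have Y: "finite Y" using assms by (intro finite_subset_ground indep_subset_ground)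
  obtain Z where "Z \<subseteq> Y" "card Z = rank_of I Y" using rank_attained[OF Y] by metis
  then show ?thesis using card_le_rank[OF Y order_refl assms] card_mono[OF Y] by (metis le_antisym)
qed

definition collinear :: "'a \<Rightarrow> 'a \<Rightarrow> 'a \<Rightarrow> bool" where
  "collinear u v w \<longleftrightarrow> {u,v,w} \<subseteq> E \<and> {u,v,w} \<notin> I"

lemma collinear_cong: "{u,v,w} = {p,q,r} \<Longrightarrow> collinear u v w \<longleftrightarrow> collinear p q r"
  unfolding collinear_def by simp

lemma collinear_swap: "collinear u v w \<Longrightarrow> collinear v u w"
  by (simp add: collinear_def insert_commute)

lemma collinear_swap23: "collinear u v w \<Longrightarrow> collinear u w v"
  by (simp add: collinear_def insert_commute)

lemma collinear_rotate: "collinear u v w \<Longrightarrow> collinear v w u"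
  by (metis collinear_cong insert_commute)

lemma collinear_in_ground: "collinear u v w \<Longrightarrow> u \<in> E \<and> v \<in> E \<and> w \<in> E"
  unfolding collinear_def by blast

lemma collinear_distinct:
  assumes "collinear u v w" shows "u \<noteq> v \<and> u \<noteq> w \<and> v \<noteq> w"
proof (rule ccontr)
  assume "\<not> (u \<noteq> v \<and> u \<noteq> w \<and> v \<noteq> w)"
  then have "card {u,v,w} \<le> 2" by (auto simp: card_insert_if)
  then show False using assms indep_if_card_le_2 unfolding collinear_def by blast
qed

lemma collinear_subset:
  assumes "collinear p q r" "{u,v,w} \<subseteq> {p,q,r}" "u \<noteq> v" "u \<noteq> w" "v \<noteq> w"
  shows "collinear u v w"
  using assms collinear_cong triple_subset_eq by metis

lemma collinear_trans:
  assumes pqr: "collinear p q r" and pqs: "collinear p q s" and "r \<noteq> s"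
  shows "collinear p r s"
proof (rule ccontr)
  assume "\<not> collinear p r s"
  moreover have "{p,r,s} \<subseteq> E" using pqr pqs collinear_in_ground by blast
  ultimately have prs: "{p,r,s} \<in> I" unfolding collinear_def by blast
  have "p \<noteq> q" "p \<noteq> r" "p \<noteq> s" using pqr pqs collinear_distinct by blast+
  then have "card {p,q} < card {p,r,s}" using \<open>r \<noteq> s\<close> by simp
  moreover have "{p,q} \<in> I" using pqr collinear_in_ground indep_if_card_le_2 by (simp add: card_insert_if)
  ultimately obtain e where "e \<in> {r,s}" "insert e {p,q} \<in> I" using indep_augment prs by auto
  then show False using pqr pqs unfolding collinear_def by (auto simp: insert_commute)
qed

definition is_line :: "'a set \<Rightarrow> bool" where
  "is_line L \<longleftrightarrow> L \<subseteq> E \<and> 3 \<le> card L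
     \<and> (\<forall>u\<in>L. \<forall>v\<in>L. \<forall>w\<in>L. u \<noteq> v \<longrightarrow> u \<noteq> w \<longrightarrow> v \<noteq> w \<longrightarrow> collinear u v w)
     \<and> (\<forall>p\<in>L. \<forall>q\<in>L. \<forall>e. collinear p q e \<longrightarrow> e \<in> L)"

lemma point_eq_singleton:
  assumes "point E I P" obtains p where "P = {p}" "p \<in> E"
proof -
  have PE: "P \<subseteq> E" and rank: "rank_of I P = 1" using assms unfolding point_def flat_def by auto
  have P: "finite P" using PE by (rule finite_subset_ground)
  obtain Y where "Y \<subseteq> P" "Y \<in> I" "card Y = 1" using rank_attained[OF P] rank by metis
  then obtain p where p: "p \<in> P" by (auto simp: card_1_singleton_iff)
  have "q = p" if "q \<in> P" for q
  proof (rule ccontr)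
    assume "q \<noteq> p"
    have "{p,q} \<in> I" using PE p that by (intro indep_if_card_le_2) (auto simp: card_insert_if)
    moreover have "{p,q} \<subseteq> P" using p that by blast
    ultimately have "card {p,q} \<le> rank_of I P" using card_le_rank[OF P] by blast
    then have "2 \<le> rank_of I P" using \<open>q \<noteq> p\<close> by simp
    then show False using rank by simp
  qed
  then show ?thesis using that p PE by blast
qed

lemma rank_2_collinear:
  assumes L: "L \<subseteq> E" "rank_of I L = 2" and "{u,v,w} \<subseteq> L" "u \<noteq> v" "u \<noteq> w" "v \<noteq> w"
  shows "collinear u v w"
proof -
  have "{u,v,w} \<notin> I"
  proof
    assume "{u,v,w} \<in> I"
    moreover have "finite L" using L(1) by (rule finite_subset_ground)
    ultimately have "card {u,v,w} \<le> 2" using card_le_rank[OF _ assms(3)] L(2) by simp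
    then show False using assms(4-6) by simp
  qed
  then show ?thesis using assms(1,3) unfolding collinear_def by blast
qed

lemma collinear_spread:
  assumes all: "\<forall>u\<in>L. \<forall>v\<in>L. \<forall>w\<in>L. u \<noteq> v \<longrightarrow> u \<noteq> w \<longrightarrow> v \<noteq> w \<longrightarrow> collinear u v w"
    and p: "p \<in> L" and q: "q \<in> L" and pqe: "collinear p q e" and e: "e \<notin> L"
    and "u \<in> L" "v \<in> L" "u \<noteq> v"
  shows "collinear u v e"
proof -
  have pw: "collinear p w e" if "w \<in> L" "w \<noteq> p" for w
  proof (cases "w = q")
    case False
    then have "collinear p q w" using all p q that pqe collinear_distinct by metis
    then show ?thesis using collinear_trans[OF _ pqe] that e by blast
  qed (use pqe in simp)
  consider "u = p" | "v = p" | "u \<noteq> p" "v \<noteq> p" by blast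
  then show ?thesis
  proof cases
    case 1
    then show ?thesis using pw assms(6-8) by simp
  next
    case 2
    then show ?thesis using pw[of u] assms(6-8) collinear_swap by blast
  next
    case 3
    then have "collinear u p v" using all assms(6-8) p by simp
    moreover have "collinear u p e" using pw[of u] 3 assms(6) collinear_swap by blast
    ultimately show ?thesis using collinear_trans e assms(7) by blast
  qed
qed

lemma line_closed:
  assumes "line E I L" "p \<in> L" "q \<in> L" "collinear p q e"
  shows "e \<in> L"
proof (rule ccontr)
  assume e: "e \<notin> L"
  have LE: "L \<subseteq> E" and rank: "rank_of I L = 2" and fl: "flat E I L"
    using assms(1) unfolding line_def flat_def by auto
  have L: "finite L" using LE by (rule finite_subset_ground)
  have "e \<in> E" using assms(4) collinear_in_ground by blast
  then have "2 < rank_of I (insert e L)" using fl e rank unfolding flat_def by simp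
  moreover obtain Y where Y: "Y \<subseteq> insert e L" "Y \<in> I" "card Y = rank_of I (insert e L)"
    using rank_attained[of "insert e L"] L by blast
  ultimately have "2 < card Y" by simp
  have "e \<in> Y"
  proof (rule ccontr)
    assume "e \<notin> Y"
    then have "Y \<subseteq> L" using Y(1) by blast
    then have "card Y \<le> 2" using card_le_rank[OF L _ Y(2)] rank by simp
    then show False using \<open>2 < card Y\<close> by simp
  qed
  moreover have "finite Y" using Y(1) L finite_subset by blast
  ultimately have "\<not> card (Y - {e}) \<le> Suc 0" using \<open>2 < card Y\<close> by simp
  then obtain u v where uv: "u \<in> Y - {e}" "v \<in> Y - {e}" "u \<noteq> v"
    using card_le_Suc0_iff_eq[of "Y - {e}"] \<open>finite Y\<close> by auto
  have "collinear u v e"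
  proof (rule collinear_spread[OF _ assms(2-4) e _ _ uv(3)])
    show "\<forall>u\<in>L. \<forall>v\<in>L. \<forall>w\<in>L. u \<noteq> v \<longrightarrow> u \<noteq> w \<longrightarrow> v \<noteq> w \<longrightarrow> collinear u v w"
      by (intro ballI impI rank_2_collinear[OF LE rank]) auto
    show "u \<in> L" "v \<in> L" using uv Y(1) by auto
  qed
  moreover have "{u,v,e} \<in> I" using uv \<open>e \<in> Y\<close> by (intro indep_subset[OF Y(2)]) auto
  ultimately show False unfolding collinear_def by blast
qed

lemma card_long_line:
  assumes long: "long_line E I L" shows "3 \<le> card L"
proof -
  have "L \<subseteq> E" using long unfolding long_line_def line_def flat_def by simp
  then have L: "finite L" by (rule finite_subset_ground)
  have "{P. point E I P \<and> P \<subseteq> L} \<subseteq> (\<lambda>p. {p}) ` L"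
  proof
    fix P assume "P \<in> {P. point E I P \<and> P \<subseteq> L}"
    then show "P \<in> (\<lambda>p. {p}) ` L" by (auto elim: point_eq_singleton)
  qed
  then have "card {P. point E I P \<and> P \<subseteq> L} \<le> card ((\<lambda>p. {p}) ` L)"
    using L by (simp add: card_mono)
  also have "\<dots> \<le> card L" using L by (rule card_image_le)
  finally show ?thesis using long unfolding long_line_def by simp
qed

lemma long_line_is_line:
  assumes long: "long_line E I L" shows "is_line L"
proof -
  have line: "line E I L" using long unfolding long_line_def by simp
  then have LE: "L \<subseteq> E" and rank: "rank_of I L = 2" unfolding line_def flat_def by simp_all
  have triples: "\<forall>u\<in>L. \<forall>v\<in>L. \<forall>w\<in>L. u \<noteq> v \<longrightarrow> u \<noteq> w \<longrightarrow> v \<noteq> w \<longrightarrow> collinear u v w"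
    by (intro ballI impI rank_2_collinear[OF LE rank]) auto
  have closed: "\<forall>p\<in>L. \<forall>q\<in>L. \<forall>e. collinear p q e \<longrightarrow> e \<in> L"
  proof (intro ballI allI impI)
    show "e \<in> L" if "p \<in> L" "q \<in> L" "collinear p q e" for p q e
      using line_closed[OF line that] .
  qed
  show ?thesis unfolding is_line_def using LE card_long_line[OF long] triples closed by blast
qed

lemma is_line_closed: "is_line L \<Longrightarrow> p \<in> L \<Longrightarrow> q \<in> L \<Longrightarrow> collinear p q e \<Longrightarrow> e \<in> L"
  unfolding is_line_def by meson

lemma is_line_collinear:
  "is_line L \<Longrightarrow> {u,v,w} \<subseteq> L \<Longrightarrow> u \<noteq> v \<Longrightarrow> u \<noteq> w \<Longrightarrow> v \<noteq> w \<Longrightarrow> collinear u v w"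
  unfolding is_line_def by (meson insert_subset)

lemma not_collinear_off_line:
  assumes "is_line L" "u \<in> L" "v \<in> L" "c \<notin> L" shows "\<not> collinear c u v"
proof
  assume "collinear c u v"
  then have "collinear u v c" by (rule collinear_rotate)
  then show False using is_line_closed[OF assms(1-3)] assms(4) by blast
qed

lemma collinear_on_line:
  assumes L: "is_line L" and uvw: "collinear u v w" and "two_in u v w L"
  shows "{u,v,w} \<subseteq> L"
proof -
  have vwu: "collinear v w u" and wuv: "collinear w u v"
    using uvw by (metis collinear_rotate)+
  have "u \<in> L \<and> v \<in> L \<and> w \<in> L"
    using assms(3) is_line_closed[OF L _ _ uvw] is_line_closed[OF L _ _ vwu] is_line_closed[OF L _ _ wuv]
    unfolding two_in_def by metis
  then show ?thesis by simp
qed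

lemma is_line_subset:
  assumes L: "is_line L" and L': "is_line L'" and "p \<in> L \<inter> L'" "q \<in> L \<inter> L'" "p \<noteq> q"
  shows "L \<subseteq> L'"
proof
  fix z assume z: "z \<in> L"
  show "z \<in> L'"
  proof (cases "z = p \<or> z = q")
    case False
    then have "collinear p q z" using assms(3-5) z by (intro is_line_collinear[OF L]) auto
    then show ?thesis using is_line_closed[OF L'] assms(3,4) by blast
  qed (use assms in blast)
qed

lemma is_lines_inter:
  assumes L: "is_line L" and L': "is_line L'" and "L \<noteq> L'" "x \<in> L \<inter> L'"
  shows "L \<inter> L' = {x}"
proof (rule ccontr)
  assume "L \<inter> L' \<noteq> {x}"
  then obtain y where "y \<in> L \<inter> L'" "y \<noteq> x" using assms(4) by blast
  then have "L \<subseteq> L'" "L' \<subseteq> L"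
    using is_line_subset[OF L L' assms(4)] is_line_subset[OF L' L] assms(4) by (simp_all add: Int_commute)
  then show False using assms(3) by simp
qed

lemma transversal_unique:
  assumes L: "is_line L" "c \<notin> L" and cau: "collinear c a u" and cav: "collinear c a v"
    and "u \<in> L" "v \<in> L"
  shows "u = v"
proof (rule ccontr)
  assume "u \<noteq> v"
  then have "collinear c u v" using collinear_trans[OF cau cav] by simp
  then show False using not_collinear_off_line[OF L(1) assms(5,6) L(2)] by simp
qed

lemma contraction_indep_iff:
  assumes c: "c \<in> E" and R: "R \<subseteq> E - {c}"
    and nc: "\<forall>u\<in>R. \<forall>v\<in>R. u \<noteq> v \<longrightarrow> \<not> collinear c u v" and X: "X \<subseteq> R"
  shows "X \<in> minor_indep E I {c} (E - R - {c}) \<longleftrightarrow> card X \<le> 2"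
proof -
  have fin: "finite X" using X R by (intro finite_subset_ground) blast
  have "c \<notin> X" using X R by blast
  then have card: "card (X \<union> {c}) = card X + 1" using fin by simp
  have "rank_of I {c} = 1" using c indep_if_card_le_2 rank_indep by simp
  moreover have "X \<subseteq> E - ({c} \<union> (E - R - {c}))" using X R by blast
  ultimately have "X \<in> minor_indep E I {c} (E - R - {c}) \<longleftrightarrow> rank_of I (X \<union> {c}) = card X + 1"
    unfolding minor_indep_def by simp
  also have "\<dots> \<longleftrightarrow> card X \<le> 2"
  proof
    assume "rank_of I (X \<union> {c}) = card X + 1"
    then show "card X \<le> 2" using rank_le_3[of "X \<union> {c}"] fin by simp
  next
    assume le2: "card X \<le> 2"
    have "X \<union> {c} \<in> I"
    proof (cases "card X = 2")
      case True
      then obtain u v where uv: "X = {u,v}" "u \<noteq> v" by (auto simp: card_2_iff)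
      then have "\<not> collinear c u v" using nc X by blast
      moreover have "{c,u,v} \<subseteq> E" using c R X uv by blast
      ultimately show ?thesis using uv unfolding collinear_def by (simp add: insert_commute)
    next
      case False
      then show ?thesis using le2 card c R X by (intro indep_if_card_le_2) auto
    qed
    then show "rank_of I (X \<union> {c}) = card X + 1" using rank_indep card by simp
  qed
  finally show ?thesis .
qed

lemma U25_minor_of_contraction:
  assumes c: "c \<in> E" and R: "R \<subseteq> E - {c}" "card R = 5"
    and nc: "\<forall>u\<in>R. \<forall>v\<in>R. u \<noteq> v \<longrightarrow> \<not> collinear c u v"
  shows "has_minor E I (U_ground 5) (U_indep 2 5)"
proof -
  have ground: "E - ({c} \<union> (E - R - {c})) = R" using R by blast
  have "finite R" using R(1) by (intro finite_subset_ground) blast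
  then obtain g :: "nat \<Rightarrow> 'a" where g: "bij_betw g {0..<5} R"
    using ex_bij_betw_nat_finite R(2) by metis
  have "matroid_iso R (minor_indep E I {c} (E - R - {c})) (U_ground 5) (U_indep 2 5)"
  proof (rule matroid_iso_of_bij)
    show "bij_betw g (U_ground 5) R" using g unfolding U_ground_def .
  next
    fix Y assume Y: "Y \<subseteq> U_ground 5"
    then have "inj_on g Y" "g ` Y \<subseteq> R"
      using g inj_on_subset bij_betw_imp_surj_on unfolding bij_betw_def U_ground_def by blast+
    then show "g ` Y \<in> minor_indep E I {c} (E - R - {c}) \<longleftrightarrow> Y \<in> U_indep 2 5"
      using contraction_indep_iff[OF c R(1) nc] Y card_image[of g Y]
      unfolding U_indep_def U_ground_def by simp
  qed
  then have "matroid_iso (E - ({c} \<union> (E - R - {c}))) (minor_indep E I {c} (E - R - {c}))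
      (U_ground 5) (U_indep 2 5)"
    by (simp only: ground)
  then show ?thesis unfolding has_minor_def
    by (intro exI[of _ "{c}"] exI[of _ "E - R - {c}"] conjI) (use c in auto)
qed

lemma U25_minor_of_five_point_line:
  assumes L: "is_line L" and c: "c \<in> E" "c \<notin> L" and "5 \<le> card L"
  shows "has_minor E I (U_ground 5) (U_indep 2 5)"
proof -
  obtain R where R: "R \<subseteq> L" "card R = 5" using obtain_subset_with_card_n assms(4) by metis
  have "\<forall>u\<in>R. \<forall>v\<in>R. u \<noteq> v \<longrightarrow> \<not> collinear c u v"
    using R(1) not_collinear_off_line[OF L _ _ c(2)] by blast
  moreover have "R \<subseteq> E - {c}" using R(1) L c(2) unfolding is_line_def by blast
  ultimately show ?thesis using U25_minor_of_contraction[OF c(1) _ R(2)] by blast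
qed

lemma U25_minor_or_transversals:
  assumes L1: "is_line L1" and L2: "is_line L2" and x: "L1 \<inter> L2 = {x}"
    and c: "c \<in> E" "c \<notin> L1" "c \<notin> L2" and card_L2: "card L2 = 4"
  shows "has_minor E I (U_ground 5) (U_indep 2 5) \<or> (\<forall>a\<in>L1 - {x}. \<exists>b\<in>L2 - {x}. collinear c a b)"
proof (rule disjCI)
  assume "\<not> (\<forall>a\<in>L1 - {x}. \<exists>b\<in>L2 - {x}. collinear c a b)"
  then obtain a where a: "a \<in> L1" "a \<noteq> x" and no_b: "\<forall>b\<in>L2 - {x}. \<not> collinear c a b" by blast
  have a_nc: "\<not> collinear c a v" if "v \<in> L2" for v
  proof (cases "v = x")
    case True
    then show ?thesis using not_collinear_off_line[OF L1 a(1) _ c(2)] x by blast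
  qed (use no_b that in blast)
  have nc: "\<forall>u\<in>insert a L2. \<forall>v\<in>insert a L2. u \<noteq> v \<longrightarrow> \<not> collinear c u v"
  proof (intro ballI impI)
    fix u v assume "u \<in> insert a L2" "v \<in> insert a L2" "u \<noteq> v"
    then consider "u = a" "v \<in> L2" | "v = a" "u \<in> L2" | "u \<in> L2" "v \<in> L2" by blast
    then show "\<not> collinear c u v"
    proof cases
      case 1
      then show ?thesis using a_nc by simp
    next
      case 2
      then show ?thesis using a_nc collinear_swap23 by blast
    next
      case 3
      then show ?thesis using not_collinear_off_line[OF L2 _ _ c(3)] by simp
    qed
  qed
  have "a \<notin> L2" using a x by blast
  moreover have "finite L2" using card_L2 by (simp add: card_ge_0_finite)
  ultimately have "card (insert a L2) = 5" using card_L2 by simp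
  moreover have "insert a L2 \<subseteq> E - {c}"
    using a c L1 L2 unfolding is_line_def by blast
  ultimately show "has_minor E I (U_ground 5) (U_indep 2 5)"
    using U25_minor_of_contraction[OF c(1) _ _ nc] by blast
qed

end

locale R9_configuration = simple_rank3_matroid +
  fixes x a1 a2 a3 b1 b2 b3 c1 c2 :: 'a
  assumes distinct: "distinct [x, a1, a2, a3, b1, b2, b3, c1, c2]"
    and ground: "E = {x, a1, a2, a3, b1, b2, b3, c1, c2}"
    and line_A: "is_line {x, a1, a2, a3}" and line_B: "is_line {x, b1, b2, b3}"
    and line_C: "is_line {x, c1, c2}"
    and transversals: "collinear c1 a1 b1" "collinear c1 a2 b2" "collinear c1 a3 b3"
      "collinear c2 a1 b2" "collinear c2 a2 b3" "collinear c2 a3 b1"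
begin

definition labels :: "nat \<Rightarrow> 'a" where
  "labels = (!) [x, a1, a2, a3, b1, b2, b3, c1, c2]"

lemma bij_labels: "bij_betw labels R9_ground E"
  unfolding labels_def using distinct by (intro bij_betw_nth) (auto simp: R9_ground_def ground)

definition long_lines :: "'a set set" where
  "long_lines = (`) labels ` R9_long_lines"

lemma long_lines_eq: "long_lines =
  {{x, a1, a2, a3}, {x, b1, b2, b3}, {x, c1, c2}, {c1, a1, b1}, {c1, a2, b2}, {c1, a3, b3},
   {c2, a1, b2}, {c2, a2, b3}, {c2, a3, b1}}"
  unfolding long_lines_def R9_long_lines_def labels_def by (simp add: numeral_eq_Suc)

lemma collinear_if_on_long_line:
  assumes L: "L \<in> long_lines" and uvw: "{u,v,w} \<subseteq> L" "u \<noteq> v" "u \<noteq> w" "v \<noteq> w"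
  shows "collinear u v w"
proof -
  have "L = {x, a1, a2, a3} \<or> L = {x, b1, b2, b3} \<or> L = {x, c1, c2} \<or>
      (\<exists>p q r. L = {p,q,r} \<and> collinear p q r)"
    using L transversals unfolding long_lines_eq by simp metis
  then show ?thesis
  proof (elim disjE exE conjE)
    assume "L = {x, a1, a2, a3}"
    then show ?thesis using uvw by (intro is_line_collinear[OF line_A]) simp_all
  next
    assume "L = {x, b1, b2, b3}"
    then show ?thesis using uvw by (intro is_line_collinear[OF line_B]) simp_all
  next
    assume "L = {x, c1, c2}"
    then show ?thesis using uvw by (intro is_line_collinear[OF line_C]) simp_all
  next
    fix p q r assume "L = {p,q,r}" "collinear p q r"
    then show ?thesis using uvw collinear_subset by simp
  qed
qed

lemma long_lines_members:
  "{x, a1, a2, a3} \<in> long_lines" "{x, b1, b2, b3} \<in> long_lines" "{x, c1, c2} \<in> long_lines"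
  "{c1, a1, b1} \<in> long_lines" "{c1, a2, b2} \<in> long_lines" "{c1, a3, b3} \<in> long_lines"
  "{c2, a1, b2} \<in> long_lines" "{c2, a2, b3} \<in> long_lines" "{c2, a3, b1} \<in> long_lines"
  unfolding long_lines_eq by (intro insertI1 insertI2)+

lemma transversal_through:
  assumes "c \<in> {c1, c2}" "a \<in> {a1, a2, a3}"
  shows "\<exists>b\<in>{b1, b2, b3}. collinear c a b \<and> {c, a, b} \<in> long_lines"
  using assms transversals long_lines_members by auto

lemma on_long_line_if_collinear:
  assumes uvw: "collinear u v w" shows "\<exists>L\<in>long_lines. {u,v,w} \<subseteq> L"
proof -
  let ?A = "{a1, a2, a3}" and ?B = "{b1, b2, b3}" and ?C = "{c1, c2}"
  have on_line: "\<exists>L\<in>long_lines. {u,v,w} \<subseteq> L" if "L \<in> long_lines" "is_line L" "two_in u v w L" for L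
    using collinear_on_line[OF that(2) uvw that(3)] that(1) by blast
  consider "two_in u v w (insert x ?A)" | "two_in u v w (insert x ?B)" | "two_in u v w (insert x ?C)"
    | "\<not> two_in u v w (insert x ?A)" "\<not> two_in u v w (insert x ?B)" "\<not> two_in u v w (insert x ?C)"
    by blast
  then show ?thesis
  proof cases
    case 1
    then show ?thesis using on_line line_A long_lines_members(1) by blast
  next
    case 2
    then show ?thesis using on_line line_B long_lines_members(2) by blast
  next
    case 3
    then show ?thesis using on_line line_C long_lines_members(3) by blast
  next
    case 4
    have "E = insert x (?A \<union> ?B \<union> ?C)" using ground by auto
    then have "{u,v,w} \<subseteq> insert x (?A \<union> ?B \<union> ?C)"
      using collinear_in_ground[OF uvw] by (simp only: insert_subset empty_subsetI simp_thms)
    then obtain a b c where abc: "a \<in> ?A" "b \<in> ?B" "c \<in> ?C" "{a,b,c} \<subseteq> {u,v,w}"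
      using triple_meets_three_parts[OF _ 4] by blast
    then have cab: "c \<in> ?C" "a \<in> ?A" "b \<in> ?B" "{c,a,b} \<subseteq> {u,v,w}"
      by (simp_all add: insert_commute)
    have "c \<noteq> a" "c \<noteq> b" "a \<noteq> b" using cab(1-3) distinct by auto
    then have uvw_eq: "{c,a,b} = {u,v,w}" using triple_subset_eq[OF cab(4)] by blast
    then have "collinear c a b" using uvw collinear_cong by blast
    moreover obtain b' where b': "b' \<in> ?B" "collinear c a b'" "{c, a, b'} \<in> long_lines"
      using transversal_through[OF cab(1,2)] by blast
    moreover have "c \<notin> {x, b1, b2, b3}" using cab(1) distinct by auto
    ultimately have "b = b'" using transversal_unique[OF line_B] cab(3) by blast
    then show ?thesis using b'(3) uvw_eq by blast
  qed
qed

lemma indep_iff: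
  assumes Z: "Z \<subseteq> E"
  shows "Z \<in> I \<longleftrightarrow> card Z \<le> 2 \<or> (card Z = 3 \<and> \<not> (\<exists>L\<in>long_lines. Z \<subseteq> L))"
proof (cases "card Z = 3")
  case True
  then obtain u v w where uvw: "Z = {u,v,w}" "u \<noteq> v" "u \<noteq> w" "v \<noteq> w"
    by (auto simp: card_3_iff)
  then have "Z \<in> I \<longleftrightarrow> \<not> collinear u v w" using Z unfolding collinear_def by simp
  also have "\<dots> \<longleftrightarrow> \<not> (\<exists>L\<in>long_lines. Z \<subseteq> L)"
    using on_long_line_if_collinear[of u v w] collinear_if_on_long_line[of _ u v w] uvw by auto
  finally show ?thesis using True by simp
next
  case False
  show ?thesis
  proof (cases "card Z \<le> 2")
    case True
    then show ?thesis using Z indep_if_card_le_2 by simp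
  next
    case False
    then show ?thesis using \<open>card Z \<noteq> 3\<close> card_indep_le_3[of Z] by auto
  qed
qed

lemma iso_R9: "matroid_iso E I R9_ground R9_indep"
proof (rule matroid_iso_of_bij[OF bij_labels])
  fix Y assume Y: "Y \<subseteq> R9_ground"
  have inj: "inj_on labels R9_ground" using bij_labels by (rule bij_betw_imp_inj_on)
  have YE: "labels ` Y \<subseteq> E" using Y bij_labels unfolding bij_betw_def by blast
  have card: "card (labels ` Y) = card Y" using inj_on_subset[OF inj Y] by (rule card_image)
  have sub: "labels ` Y \<subseteq> labels ` L \<longleftrightarrow> Y \<subseteq> L" if "L \<in> R9_long_lines" for L
  proof -
    have L: "L \<subseteq> R9_ground" using that unfolding R9_long_lines_def R9_ground_def by auto
    show ?thesis
    proof
      assume sub: "labels ` Y \<subseteq> labels ` L"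
      show "Y \<subseteq> L"
      proof
        fix y assume "y \<in> Y"
        then have "labels y \<in> labels ` L" using sub by blast
        then show "y \<in> L" using inj_on_image_mem_iff[OF inj _ L] \<open>y \<in> Y\<close> Y by blast
      qed
    qed (rule image_mono)
  qed
  have "(\<exists>L\<in>long_lines. labels ` Y \<subseteq> L) \<longleftrightarrow> (\<exists>L\<in>R9_long_lines. labels ` Y \<subseteq> labels ` L)"
    unfolding long_lines_def by blast
  also have "\<dots> \<longleftrightarrow> (\<exists>L\<in>R9_long_lines. Y \<subseteq> L)" using sub by (rule bex_cong[OF refl])
  finally have "(\<exists>L\<in>long_lines. labels ` Y \<subseteq> L) \<longleftrightarrow> (\<exists>L\<in>R9_long_lines. Y \<subseteq> L)" .
  with Y show "labels ` Y \<in> I \<longleftrightarrow> Y \<in> R9_indep"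
    unfolding indep_iff[OF YE] card R9_indep_def mem_Collect_eq by (simp only: simp_thms)
qed

end

context simple_rank3_matroid
begin

lemma no_shared_transversal:
  assumes L: "is_line L" "c1 \<in> L" "c2 \<in> L" "c1 \<noteq> c2" "a \<notin> L"
  shows "\<not> (collinear c1 a b \<and> collinear c2 a b)"
proof
  assume "collinear c1 a b \<and> collinear c2 a b"
  then have "collinear a b c1" "collinear a b c2" using collinear_rotate by blast+
  then have "collinear a c1 c2" using collinear_trans L(4) by blast
  then have "collinear c1 c2 a" by (rule collinear_rotate)
  then show False using is_line_closed[OF L(1-3)] L(5) by blast
qed

lemma transversal_bijection:
  assumes L1: "is_line L1" and L2: "is_line L2" and c: "c \<notin> L1"
    and A: "L1 - {x} = {a1, a2, a3}" "distinct [a1, a2, a3]" and B: "card (L2 - {x}) = 3"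
    and match: "\<forall>a\<in>L1 - {x}. \<exists>b\<in>L2 - {x}. collinear c a b"
  obtains b1 b2 b3 where "L2 - {x} = {b1, b2, b3}" "distinct [b1, b2, b3]"
    "collinear c a1 b1" "collinear c a2 b2" "collinear c a3 b3"
proof -
  have "a1 \<in> L1 - {x}" "a2 \<in> L1 - {x}" "a3 \<in> L1 - {x}" using A(1) by auto
  then obtain b1 b2 b3 where b: "b1 \<in> L2 - {x}" "b2 \<in> L2 - {x}" "b3 \<in> L2 - {x}"
    and col: "collinear c a1 b1" "collinear c a2 b2" "collinear c a3 b3"
    using match by meson
  have "a = a'" if "collinear c a b" "collinear c a' b" "a \<in> {a1, a2, a3}" "a' \<in> {a1, a2, a3}" for a a' b
    using transversal_unique[OF L1 c] collinear_swap23[OF that(1)] collinear_swap23[OF that(2)]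
      that(3,4) A(1) by blast
  then have dist: "distinct [b1, b2, b3]" using col A(2) by auto
  moreover have "{b1, b2, b3} = L2 - {x}"
  proof (rule card_subset_eq)
    show "finite (L2 - {x})" using L2 unfolding is_line_def by (intro finite_subset_ground) blast
  qed (use b dist B in auto)
  ultimately show ?thesis using that[of b1 b2 b3] col by simp
qed

lemma R9_of_two_transversal_bijections:
  assumes dist: "distinct [x, a1, a2, a3, b1, b2, b3, c1, c2]"
    and ground: "E = {x, a1, a2, a3, b1, b2, b3, c1, c2}"
    and lines: "is_line {x, a1, a2, a3}" "is_line {x, b1, b2, b3}" "is_line {x, c1, c2}"
    and col1: "collinear c1 a1 b1" "collinear c1 a2 b2" "collinear c1 a3 b3"
    and col2: "collinear c2 a1 d1" "collinear c2 a2 d2" "collinear c2 a3 d3"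
    and d: "{d1, d2, d3} = {b1, b2, b3}" "distinct [d1, d2, d3]"
  shows "matroid_iso E I R9_ground R9_indep"
proof -
  have "a \<notin> {x, c1, c2}" if "a \<in> {a1, a2, a3}" for a using that dist by auto
  moreover have "c1 \<in> {x, c1, c2}" "c2 \<in> {x, c1, c2}" "c1 \<noteq> c2" using dist by auto
  ultimately have "\<not> (collinear c1 a b \<and> collinear c2 a b)" if "a \<in> {a1, a2, a3}" for a b
    using no_shared_transversal[OF lines(3)] that by blast
  then have "d1 \<noteq> b1" "d2 \<noteq> b2" "d3 \<noteq> b3" using col1 col2 by auto
  moreover have "d1 \<in> {b1, b2, b3}" "d2 \<in> {b1, b2, b3}" "d3 \<in> {b1, b2, b3}" using d(1) by blast+
  ultimately consider "d1 = b2" "d2 = b3" "d3 = b1" | "d1 = b3" "d2 = b1" "d3 = b2"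
    using d(2) by auto
  then show ?thesis
  proof cases
    case 1
    interpret R9_configuration E I x a1 a2 a3 b1 b2 b3 c1 c2
      by unfold_locales (use assms 1 in auto)
    show ?thesis by (rule iso_R9)
  next
    case 2
    interpret R9_configuration E I x a1 a3 a2 b1 b3 b2 c1 c2
      by unfold_locales (use assms 2 in \<open>auto simp: insert_commute\<close>)
    show ?thesis by (rule iso_R9)
  qed
qed

lemma U25_minor_or_R9_of_lines_4_4_3:
  assumes L1: "is_line L1" and L2: "is_line L2" and L3: "is_line L3"
    and x: "L1 \<inter> L2 = {x}" "L1 \<inter> L3 = {x}" "L2 \<inter> L3 = {x}"
    and ground: "E = L1 \<union> L2 \<union> L3" and card: "card L1 = 4" "card L2 = 4" "card L3 = 3"
  shows "has_minor E I (U_ground 5) (U_indep 2 5) \<or> matroid_iso E I R9_ground R9_indep"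
proof (cases "has_minor E I (U_ground 5) (U_indep 2 5)")
  case no_minor: False
  have xL: "x \<in> L1" "x \<in> L2" "x \<in> L3" using x by blast+
  then have "card (L1 - {x}) = 3" "card (L2 - {x}) = 3" "card (L3 - {x}) = 2"
    using card by (simp_all add: card_Diff_singleton_if)
  then obtain a1 a2 a3 c1 c2 where a: "L1 - {x} = {a1, a2, a3}" "distinct [a1, a2, a3]"
      and c: "L3 - {x} = {c1, c2}" "c1 \<noteq> c2" and B: "card (L2 - {x}) = 3"
    by (auto simp: card_3_iff card_2_iff)
  have c_off: "c1 \<notin> L1" "c1 \<notin> L2" "c2 \<notin> L1" "c2 \<notin> L2" and cE: "c1 \<in> E" "c2 \<in> E"
    using c x ground by blast+
  have "\<forall>a\<in>L1 - {x}. \<exists>b\<in>L2 - {x}. collinear c1 a b"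
    using U25_minor_or_transversals[OF L1 L2 x(1) cE(1) c_off(1,2) card(2)] no_minor by argo
  then obtain b1 b2 b3 where b: "L2 - {x} = {b1, b2, b3}" "distinct [b1, b2, b3]"
      "collinear c1 a1 b1" "collinear c1 a2 b2" "collinear c1 a3 b3"
    by (rule transversal_bijection[OF L1 L2 c_off(1) a B])
  have "\<forall>a\<in>L1 - {x}. \<exists>b\<in>L2 - {x}. collinear c2 a b"
    using U25_minor_or_transversals[OF L1 L2 x(1) cE(2) c_off(3,4) card(2)] no_minor by argo
  then obtain d1 d2 d3 where d: "L2 - {x} = {d1, d2, d3}" "distinct [d1, d2, d3]"
      "collinear c2 a1 d1" "collinear c2 a2 d2" "collinear c2 a3 d3"
    by (rule transversal_bijection[OF L1 L2 c_off(3) a B])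
  have lines: "L1 = {x, a1, a2, a3}" "L2 = {x, b1, b2, b3}" "L3 = {x, c1, c2}"
    using a(1) b(1) c(1) xL by (metis insert_Diff)+
  then have ground': "E = set [x, a1, a2, a3, b1, b2, b3, c1, c2]" using ground by auto
  have "finite L1" "finite L2" "finite L3"
    using L1 L2 L3 unfolding is_line_def by (auto intro: finite_subset_ground)
  then have "card E = 9" using card_union_concurrent[OF _ _ _ x] card ground by simp
  then have "distinct [x, a1, a2, a3, b1, b2, b3, c1, c2]"
    using ground' by (intro card_distinct) simp
  moreover have "E = {x, a1, a2, a3, b1, b2, b3, c1, c2}" using ground' by simp
  moreover have "{d1, d2, d3} = {b1, b2, b3}" using b(1) d(1) by simp
  ultimately have "matroid_iso E I R9_ground R9_indep"
    by (rule R9_of_two_transversal_bijections[OF _ _ L1[unfolded lines(1)] L2[unfolded lines(2)]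
          L3[unfolded lines(3)] b(3-5) d(3-5) _ d(2)])
  then show ?thesis by simp
qed simp

lemma U25_minor_or_R9_of_concurrent_lines:
  assumes L1: "is_line L1" and L2: "is_line L2" and L3: "is_line L3"
    and x: "L1 \<inter> L2 = {x}" "L1 \<inter> L3 = {x}" "L2 \<inter> L3 = {x}"
    and ground: "E = L1 \<union> L2 \<union> L3" and card_E: "card E = 9"
  shows "has_minor E I (U_ground 5) (U_indep 2 5) \<or> matroid_iso E I R9_ground R9_indep"
proof -
  have big: "has_minor E I (U_ground 5) (U_indep 2 5)"
    if L: "is_line L" and L': "is_line L'" and LL': "L \<inter> L' = {x}" and five: "5 \<le> card L" for L L'
  proof -
    have "L' \<noteq> {x}" using L' unfolding is_line_def by auto
    then obtain c where "c \<in> L'" "c \<noteq> x" using LL' by blast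
    moreover have "L' \<subseteq> E" using L' unfolding is_line_def by simp
    ultimately show ?thesis using U25_minor_of_five_point_line[OF L _ _ five] LL' by blast
  qed
  have "finite L1" "finite L2" "finite L3"
    using L1 L2 L3 unfolding is_line_def by (auto intro: finite_subset_ground)
  then have "card L1 + card L2 + card L3 = 11"
    using card_union_concurrent[OF _ _ _ x] ground card_E by simp
  moreover have "3 \<le> card L1" "3 \<le> card L2" "3 \<le> card L3"
    using L1 L2 L3 unfolding is_line_def by simp_all
  ultimately consider "5 \<le> card L1" | "5 \<le> card L2" | "5 \<le> card L3"
    | "card L1 = 3" "card L2 = 4" "card L3 = 4" | "card L1 = 4" "card L2 = 3" "card L3 = 4"
    | "card L1 = 4" "card L2 = 4" "card L3 = 3"
    by linarith
  then show ?thesis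
  proof cases
    case 1
    then show ?thesis using big[OF L1 L2 x(1)] by simp
  next
    case 2
    then show ?thesis using big[OF L2 L1] x(1) by (simp add: Int_commute)
  next
    case 3
    then show ?thesis using big[OF L3 L1] x(2) by (simp add: Int_commute)
  next
    case 4
    then show ?thesis
      using U25_minor_or_R9_of_lines_4_4_3[OF L2 L3 L1 x(3)] x(1,2) ground by (simp add: Int_commute Un_ac)
  next
    case 5
    then show ?thesis
      using U25_minor_or_R9_of_lines_4_4_3[OF L1 L3 L2 x(2,1)] x(3) ground by (simp add: Int_commute Un_ac)
  next
    case 6
    then show ?thesis using U25_minor_or_R9_of_lines_4_4_3[OF L1 L2 L3 x ground] by simp
  qed
qed

end

theorem lemma5p1:
  fixes E :: "'a set" and I :: "'a set set"
  assumes "matroid E I"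
    and "simple_matroid E I"
    and "rank_of I E = 3"
    and "card E = 9"
    and "\<exists>L1 L2 L3 P. long_line E I L1 \<and> long_line E I L2 \<and> long_line E I L3
           \<and> L1 \<noteq> L2 \<and> L1 \<noteq> L3 \<and> L2 \<noteq> L3
           \<and> point E I P \<and> P \<subseteq> L1 \<inter> L2 \<inter> L3
           \<and> E = L1 \<union> L2 \<union> L3"
  shows "has_minor E I (U_ground 5) (U_indep 2 5) \<or> matroid_iso E I R9_ground R9_indep"
proof -
  interpret simple_rank3_matroid E I using assms(1-3) by unfold_locales
  obtain L1 L2 L3 P where long: "long_line E I L1" "long_line E I L2" "long_line E I L3"
    and differ: "L1 \<noteq> L2" "L1 \<noteq> L3" "L2 \<noteq> L3"
    and P: "point E I P" "P \<subseteq> L1 \<inter> L2 \<inter> L3" and ground: "E = L1 \<union> L2 \<union> L3"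
    using assms(5) by blast
  obtain x where "P = {x}" using point_eq_singleton[OF P(1)] by blast
  then have x: "x \<in> L1" "x \<in> L2" "x \<in> L3" using P(2) by auto
  have lines: "is_line L1" "is_line L2" "is_line L3" using long long_line_is_line by blast+
  have "L1 \<inter> L2 = {x}" "L1 \<inter> L3 = {x}" "L2 \<inter> L3 = {x}"
    using is_lines_inter lines differ x by blast+
  then show ?thesis
    using U25_minor_or_R9_of_concurrent_lines[OF lines _ _ _ ground assms(4)] by blast
qed

end
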